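(* Let $p,q,r\in(0,1/36)$, $h=8/15$, $a=3/15$, and let $K_{pqr}$ be the attractor of $\mathcal S_{pqr}=\{S_1,\dots,S_6\}$ with $S_1(x)=px$, $S_2(x)=a+rx$, $S_3(x)=h-qx$, $S_4(x)=h-r+rx$, $S_5(x)=1-a-rx$, $S_6(x)=1-r+rx$. If $S_3(K_{pqr})\cap S_4(K_{pqr})=\{h\}$, then $d=\dim_H K_{pqr}$ satisfies $p^d+q^d+4r^d=1$.
   Context: $\dim_H$ denotes Hausdorff dimension. *)

theory Defs
  imports "HOL-Analysis.Analysis"
begin

definition hcontent :: "real \<Rightarrow> real set \<Rightarrow> ennreal" where
  "hcontent s U = (if U = {} then 0
                   else if diameter U = 0 then (if s = 0 then 1 else 0)
                   else ennreal (diameter U powr s))"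

definition hausdorff_delta :: "real \<Rightarrow> real \<Rightarrow> real set \<Rightarrow> ennreal" where
  "hausdorff_delta s \<delta> A =
     (INF U \<in> {U :: nat \<Rightarrow> real set. A \<subseteq> (\<Union>i. U i) \<and> (\<forall>i. bounded (U i) \<and> diameter (U i) \<le> \<delta>)}.
        (\<Sum>i. hcontent s (U i)))"

definition hausdorff_measure :: "real \<Rightarrow> real set \<Rightarrow> ennreal" where
  "hausdorff_measure s A = (SUP \<delta> \<in> {0<..}. hausdorff_delta s \<delta> A)"

definition hausdorff_dim :: "real set \<Rightarrow> real" where
  "hausdorff_dim A = Inf {s. 0 \<le> s \<and> hausdorff_measure s A = 0}"

text \<open>K is the attractor of the IFS {S_i | i in I}: the nonempty compact set with
  K = union of the S_i(K) (unique by Hutchinson's theorem for contractions).\<close>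

definition is_attractor :: "(nat \<Rightarrow> real \<Rightarrow> real) \<Rightarrow> nat set \<Rightarrow> real set \<Rightarrow> bool" where
  "is_attractor S I K \<longleftrightarrow> K \<noteq> {} \<and> compact K \<and> K = (\<Union>i\<in>I. S i ` K)"

end

theory Submission
  imports Defs "HOL-Library.Sublist"
begin

text \<open>
  All six maps are similarities, of ratios p, r, q, r, r, r, mapping [0, 1] into itself, and their
  images of [0, 1] are pairwise separated except for S 3 and S 4, whose images of K meet only in
  h = S 3 0. Write \<lambda>(t) = p^t + q^t + 4 r^t.

  If \<lambda>(t) < 1, covering K by its 6^n cylinders of level n shows H^t(K) = 0.
  If \<lambda>(t) > 1, keep only the words of length n without a suffix 3 1^k: the point 0 lies only
  in the cylinders of the words 1^k, so h lies in no kept 3-cylinder and the kept cylinders are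
  pairwise disjoint. Their ratios satisfy \<Sum> \<rho>_w^t = (1 - \<beta>) \<lambda>(t)^n + \<beta> p^(t n) with
  \<beta> < 1, which exceeds 1 for large n, and the mass distribution principle for this strongly
  separated system gives H^t(K) > 0. Hence dim_H K is the root of \<lambda>(t) = 1.
\<close>

section \<open>Words\<close>

fun word_map :: "('j \<Rightarrow> 'a \<Rightarrow> 'a) \<Rightarrow> 'j list \<Rightarrow> 'a \<Rightarrow> 'a" where
  "word_map T [] = id"
| "word_map T (j # u) = T j \<circ> word_map T u"

lemma word_map_append: "word_map T (u @ v) = word_map T u \<circ> word_map T v"
  by (induction u) auto

lemma word_map_image_subset:
  assumes "\<And>j. j \<in> J \<Longrightarrow> T j ` K \<subseteq> K" "set u \<subseteq> J"
  shows "word_map T u ` K \<subseteq> K"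
  using assms(2) by (induction u) (use assms(1) in \<open>fastforce simp: image_comp[symmetric]\<close>)+

lemma word_map_dist:
  assumes "\<And>j x y. j \<in> J \<Longrightarrow> dist (T j x) (T j y) = \<rho> j * dist x y" "set u \<subseteq> J"
  shows "dist (word_map T u x) (word_map T u y) = prod_list (map \<rho> u) * dist x y"
  using assms(2) by (induction u arbitrary: x y) (auto simp: assms(1))

lemma prod_list_pos:
  fixes xs :: "'a :: linordered_semidom list"
  shows "(\<And>x. x \<in> set xs \<Longrightarrow> 0 < x) \<Longrightarrow> 0 < prod_list xs"
  by (induction xs) auto

lemma prod_list_le_power:
  fixes xs :: "'a :: linordered_semidom list"
  shows "(\<And>x. x \<in> set xs \<Longrightarrow> 0 \<le> x \<and> x \<le> m) \<Longrightarrow> prod_list xs \<le> m ^ length xs"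
proof (induction xs)
  case (Cons a xs)
  then have "0 \<le> a" "a \<le> m" "0 \<le> m"
    by force+
  with Cons show ?case
    by (auto intro!: mult_mono prod_list_nonneg)
qed simp

lemma prod_list_map_powr:
  fixes \<rho> :: "'j \<Rightarrow> real"
  shows "(\<And>j. j \<in> set u \<Longrightarrow> 0 \<le> \<rho> j) \<Longrightarrow>
     prod_list (map \<rho> u) powr t = prod_list (map (\<lambda>j. \<rho> j powr t) u)"
proof (induction u)
  case (Cons j u)
  then have "0 \<le> prod_list (map \<rho> u)"
    by (intro prod_list_nonneg) auto
  with Cons show ?case
    by (simp add: powr_mult)
qed simp

definition words :: "'j set \<Rightarrow> nat \<Rightarrow> 'j list set" where
  "words A n = {w. set w \<subseteq> A \<and> length w = n}"

lemma words_0 [simp]: "words A 0 = {[]}"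
  by (auto simp: words_def)

lemma words_Suc: "words A (Suc n) = (\<lambda>(j, w). j # w) ` (A \<times> words A n)"
  by (auto simp: words_def length_Suc_conv)

lemma finite_words: "finite A \<Longrightarrow> finite (words A n)"
  unfolding words_def by (rule finite_lists_length_eq)

lemma sum_prod_list_words:
  fixes f :: "'j \<Rightarrow> 'a :: comm_semiring_1"
  assumes "finite A"
  shows "(\<Sum>w\<in>words A n. prod_list (map f w)) = sum f A ^ n"
proof (induction n)
  case (Suc n)
  have "inj_on (\<lambda>(j, w). j # w) (A \<times> words A n)"
    by (auto simp: inj_on_def)
  then have "(\<Sum>w\<in>words A (Suc n). prod_list (map f w)) = (\<Sum>(j, w)\<in>A \<times> words A n. f j * prod_list (map f w))"
    unfolding words_Suc by (simp add: sum.reindex case_prod_unfold)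
  also have "\<dots> = sum f A * (\<Sum>w\<in>words A n. prod_list (map f w))"
    by (simp add: sum_product sum.cartesian_product)
  finally show ?case
    by (simp add: Suc.IH)
qed simp

lemma words_prefix_eq:
  assumes "set u \<subseteq> A" "length u \<le> n"
  shows "{w \<in> words A n. prefix u w} = (@) u ` words A (n - length u)"
  using assms by (auto simp: words_def prefix_def)

lemma sum_prod_list_words_prefix_le:
  fixes f :: "'j \<Rightarrow> real"
  assumes "finite A" "sum f A = 1" "\<And>j. 0 \<le> f j"
  shows "(\<Sum>w\<in>{w \<in> words A n. prefix u w}. prod_list (map f w)) \<le> prod_list (map f u)"
proof (cases "set u \<subseteq> A \<and> length u \<le> n")
  case True
  have "inj ((@) u)"
    by (simp add: inj_on_def)
  then have "(\<Sum>w\<in>{w \<in> words A n. prefix u w}. prod_list (map f w))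
      = prod_list (map f u) * (\<Sum>v\<in>words A (n - length u). prod_list (map f v))"
    using True by (simp add: words_prefix_eq sum.reindex inj_on_subset sum_distrib_left)
  then show ?thesis
    using assms by (simp add: sum_prod_list_words)
next
  case False
  then have "{w \<in> words A n. prefix u w} = {}"
    by (auto simp: words_def prefix_def)
  then show ?thesis
    using assms(3) by (simp only: sum.empty) (intro prod_list_nonneg, auto)
qed

section \<open>Hausdorff measure on the real line\<close>

lemma hcontent_eq_powr: "0 < s \<Longrightarrow> hcontent s U = ennreal (diameter U powr s)"
  by (simp add: hcontent_def)

lemma hcontent_antimono_exp:
  assumes "0 \<le> s" "s < s'" "bounded U" "diameter U \<le> 1"
  shows "hcontent s' U \<le> hcontent s U"
proof (cases "U = {} \<or> diameter U = 0")
  case False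
  then have "diameter U powr s' \<le> diameter U powr s"
    using assms diameter_ge_0[OF assms(3)] by (intro powr_mono') auto
  with False assms(1,2) show ?thesis
    by (simp add: hcontent_def ennreal_leI)
qed (use assms in \<open>auto simp: hcontent_def\<close>)

lemma hausdorff_delta_antimono_exp:
  assumes "0 \<le> s" "s < s'" "\<delta> \<le> 1"
  shows "hausdorff_delta s' \<delta> A \<le> hausdorff_delta s \<delta> A"
  unfolding hausdorff_delta_def
proof (intro INF_mono bexI)
  fix U :: "nat \<Rightarrow> real set"
  assume U: "U \<in> {U. A \<subseteq> (\<Union>i. U i) \<and> (\<forall>i. bounded (U i) \<and> diameter (U i) \<le> \<delta>)}"
  show "(\<Sum>i. hcontent s' (U i)) \<le> (\<Sum>i. hcontent s (U i))"
    using U assms by (intro suminf_le summableI hcontent_antimono_exp) (auto intro: order_trans)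
qed

lemma hausdorff_delta_antimono:
  "\<delta>\<^sub>1 \<le> \<delta>\<^sub>2 \<Longrightarrow> hausdorff_delta s \<delta>\<^sub>2 A \<le> hausdorff_delta s \<delta>\<^sub>1 A"
  unfolding hausdorff_delta_def by (rule INF_superset_mono) (auto intro: order_trans)

lemma hausdorff_measure_eq_0_iff:
  "hausdorff_measure s A = 0 \<longleftrightarrow> (\<forall>\<delta>>0. hausdorff_delta s \<delta> A = 0)"
  unfolding hausdorff_measure_def
  by (simp add: SUP_eq_iff) (metis bot.extremum_uniqueI greaterThan_iff SUP_upper)

lemma hausdorff_measure_eq_0_mono_exp:
  assumes "0 \<le> s" "s < s'" "hausdorff_measure s A = 0"
  shows "hausdorff_measure s' A = 0"
  unfolding hausdorff_measure_eq_0_iff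
proof (intro allI impI)
  fix \<delta> :: real assume "0 < \<delta>"
  have "hausdorff_delta s' \<delta> A \<le> hausdorff_delta s' (min \<delta> 1) A"
    by (rule hausdorff_delta_antimono) simp
  also have "\<dots> \<le> hausdorff_delta s (min \<delta> 1) A"
    using assms(1,2) by (rule hausdorff_delta_antimono_exp) simp
  also have "\<dots> = 0"
    using assms(3) \<open>0 < \<delta>\<close> by (simp add: hausdorff_measure_eq_0_iff)
  finally show "hausdorff_delta s' \<delta> A = 0"
    by simp
qed

lemma hausdorff_dim_eqI:
  assumes "0 < d"
    and "\<And>s. d < s \<Longrightarrow> hausdorff_measure s A = 0"
    and "\<And>s. 0 < s \<Longrightarrow> s < d \<Longrightarrow> hausdorff_measure s A \<noteq> 0"
  shows "hausdorff_dim A = d"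
proof -
  define Z where "Z = {s. 0 \<le> s \<and> hausdorff_measure s A = 0}"
  have lower: "d \<le> s" if "s \<in> Z" for s
  proof (rule ccontr)
    assume "\<not> d \<le> s"
    moreover have "hausdorff_measure (max s (d / 2)) A = 0"
      using \<open>s \<in> Z\<close> hausdorff_measure_eq_0_mono_exp[of s "d / 2"]
      by (cases "s < d / 2") (auto simp: Z_def max_def)
    ultimately show False
      using assms(1) assms(3)[of "max s (d / 2)"] by simp
  qed
  have above: "d + e \<in> Z" if "0 < e" for e
    using assms(1,2) that by (simp add: Z_def)
  have "d \<le> Inf Z"
    using above[of 1] lower by (intro cInf_greatest) auto
  moreover have "Inf Z \<le> d"
  proof (rule field_le_epsilon)
    fix e :: real assume "0 < e"
    then show "Inf Z \<le> d + e"
      using above lower by (intro cInf_lower) (auto simp: bdd_below_def)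
  qed
  ultimately show ?thesis
    by (simp add: hausdorff_dim_def Z_def)
qed

lemma hausdorff_delta_le_finite_cover:
  assumes "finite W" "A \<subseteq> (\<Union>w\<in>W. U w)" "0 \<le> \<delta>"
    and "\<And>w. w \<in> W \<Longrightarrow> bounded (U w) \<and> diameter (U w) \<le> \<delta>"
  shows "hausdorff_delta s \<delta> A \<le> (\<Sum>w\<in>W. hcontent s (U w))"
proof -
  obtain g where g: "bij_betw g {0..<card W} W"
    using ex_bij_betw_nat_finite[OF assms(1)] by blast
  have g_mem: "g i \<in> W" if "i < card W" for i
    using bij_betw_apply[OF g] that by simp
  have g_onto: "\<exists>i<card W. g i = w" if "w \<in> W" for w
  proof -
    have "w \<in> g ` {0..<card W}"
      using bij_betw_imp_surj_on[OF g] that by simp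
    then show ?thesis
      by auto
  qed
  define V where "V i = (if i < card W then U (g i) else {})" for i
  have "A \<subseteq> (\<Union>i. V i)"
    using assms(2) g_onto by (fastforce simp: V_def)
  moreover have "bounded (V i) \<and> diameter (V i) \<le> \<delta>" for i
    using assms(3,4) g_mem by (simp add: V_def)
  ultimately have "hausdorff_delta s \<delta> A \<le> (\<Sum>i. hcontent s (V i))"
    unfolding hausdorff_delta_def by (intro INF_lower) auto
  also have "\<dots> = (\<Sum>i\<in>{0..<card W}. hcontent s (V i))"
    by (rule suminf_finite) (auto simp: V_def hcontent_def)
  also have "\<dots> = (\<Sum>w\<in>W. hcontent s (U w))"
    using sum.reindex_bij_betw[OF g] by (simp add: V_def)
  finally show ?thesis .
qed

text \<open>The slack \<open>\<epsilon>\<close> pays for sets of diameter \<open>0\<close>: their content is \<open>0\<close>, but the enclosing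
  ball must have positive radius.\<close>

lemma bounded_subset_ball_powr:
  fixes U :: "real set"
  assumes "bounded U" "U \<noteq> {}" "0 < s" "0 < \<epsilon>"
  obtains x R where "0 < R" "U \<subseteq> ball x R" "(2 * R) powr s \<le> 4 powr s * diameter U powr s + \<epsilon>"
proof -
  obtain x where "x \<in> U"
    using assms(2) by blast
  define R where "R = (if 0 < diameter U then 2 * diameter U else \<epsilon> powr (1 / s) / 2)"
  have "0 < R"
    using assms(4) by (simp add: R_def)
  moreover have "U \<subseteq> ball x R"
  proof
    fix y assume "y \<in> U"
    with assms(1) \<open>x \<in> U\<close> have "dist x y \<le> diameter U"
      by (rule diameter_bounded_bound)
    then show "y \<in> ball x R"
      using \<open>0 < R\<close> diameter_ge_0[OF assms(1)] by (auto simp: R_def)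
  qed
  moreover have "(2 * R) powr s \<le> 4 powr s * diameter U powr s + \<epsilon>"
  proof (cases "0 < diameter U")
    case True
    then have "(2 * R) powr s = 4 powr s * diameter U powr s"
      by (simp add: R_def powr_mult)
    then show ?thesis
      using assms(4) by simp
  next
    case False
    then have "(2 * R) powr s = \<epsilon>"
      using assms(3,4) by (simp add: R_def powr_powr)
    then show ?thesis
      by simp
  qed
  ultimately show ?thesis
    by (rule that)
qed

lemma finite_ball_subcover_powr:
  fixes A :: "real set" and U :: "nat \<Rightarrow> real set"
  assumes "compact A" "A \<subseteq> (\<Union>i. U i)" "\<And>i. bounded (U i)" "0 < s" "\<And>i. 0 < \<epsilon> i"
  shows "\<exists>F x R. finite F \<and> A \<subseteq> (\<Union>i\<in>F. ball (x i) (R i)) \<and>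
    (\<forall>i\<in>F. 0 < R i \<and> (2 * R i) powr s \<le> 4 powr s * diameter (U i) powr s + \<epsilon> i)"
proof -
  have "\<exists>x R. U i \<noteq> {} \<longrightarrow> 0 < R \<and> U i \<subseteq> ball x R \<and>
      (2 * R) powr s \<le> 4 powr s * diameter (U i) powr s + \<epsilon> i" for i
  proof (cases "U i = {}")
    case False
    then show ?thesis
      using bounded_subset_ball_powr[OF assms(3) _ assms(4,5)] by metis
  qed simp
  then obtain x R where R: "\<And>i. U i \<noteq> {} \<Longrightarrow> 0 < R i \<and> U i \<subseteq> ball (x i) (R i) \<and>
      (2 * R i) powr s \<le> 4 powr s * diameter (U i) powr s + \<epsilon> i"
    by metis
  have cover: "A \<subseteq> (\<Union>i\<in>{i. U i \<noteq> {}}. ball (x i) (R i))"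
  proof
    fix y assume "y \<in> A"
    then obtain i where "y \<in> U i"
      using assms(2) by blast
    then show "y \<in> (\<Union>i\<in>{i. U i \<noteq> {}}. ball (x i) (R i))"
      using R[of i] by blast
  qed
  obtain F where F: "F \<subseteq> {i. U i \<noteq> {}}" "finite F" "A \<subseteq> (\<Union>i\<in>F. ball (x i) (R i))"
    by (rule compactE_image[OF assms(1) _ cover]) auto
  moreover have "\<forall>i\<in>F. 0 < R i \<and> (2 * R i) powr s \<le> 4 powr s * diameter (U i) powr s + \<epsilon> i"
    using F(1) R by blast
  ultimately show ?thesis
    by blast
qed

lemma suminf_hcontent_ge_if_ball_covers:
  fixes A :: "real set" and U :: "nat \<Rightarrow> real set"
  assumes "compact A" "0 < s" "0 < c" "A \<subseteq> (\<Union>i. U i)" "\<And>i. bounded (U i)"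
    and ball_covers: "\<And>(F :: nat set) x R. finite F \<Longrightarrow> (\<And>i. i \<in> F \<Longrightarrow> 0 < R i) \<Longrightarrow>
          A \<subseteq> (\<Union>i\<in>F. ball (x i) (R i)) \<Longrightarrow> c \<le> (\<Sum>i\<in>F. (2 * R i) powr s)"
  shows "ennreal (c / (2 * 4 powr s)) \<le> (\<Sum>i. hcontent s (U i))"
proof -
  define \<epsilon> where "\<epsilon> i = c / 2 * (1 / 2) ^ Suc i" for i :: nat
  have "0 < \<epsilon> i" for i
    using assms(3) by (simp add: \<epsilon>_def)
  then obtain F x R where F: "finite F" "A \<subseteq> (\<Union>i\<in>F. ball (x i) (R i))"
    and R: "\<forall>i\<in>F. 0 < R i \<and> (2 * R i) powr s \<le> 4 powr s * diameter (U i) powr s + \<epsilon> i"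
    using finite_ball_subcover_powr[OF assms(1,4,5,2)] by meson
  have geometric: "(\<Sum>i\<in>F. (1 / 2 :: real) ^ Suc i) \<le> 1"
    using sum_le_suminf[OF sums_summable[OF power_half_series] F(1)] power_half_series
    by (simp add: sums_iff)
  have "c \<le> (\<Sum>i\<in>F. (2 * R i) powr s)"
    using R by (intro ball_covers[OF F(1) _ F(2)]) blast
  also have "\<dots> \<le> (\<Sum>i\<in>F. 4 powr s * diameter (U i) powr s + \<epsilon> i)"
    using R by (intro sum_mono) blast
  also have "\<dots> = 4 powr s * (\<Sum>i\<in>F. diameter (U i) powr s) + c / 2 * (\<Sum>i\<in>F. (1 / 2) ^ Suc i)"
    by (simp add: \<epsilon>_def sum.distrib sum_distrib_left)
  also have "\<dots> \<le> 4 powr s * (\<Sum>i\<in>F. diameter (U i) powr s) + c / 2"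
    using geometric assms(3) by simp
  finally have "c \<le> (\<Sum>i\<in>F. diameter (U i) powr s) * (2 * 4 powr s)"
    by (simp add: algebra_simps)
  then have "ennreal (c / (2 * 4 powr s)) \<le> ennreal (\<Sum>i\<in>F. diameter (U i) powr s)"
    by (intro ennreal_leI) (simp add: pos_divide_le_eq)
  also have "\<dots> = (\<Sum>i\<in>F. hcontent s (U i))"
    using assms(2) by (simp add: hcontent_eq_powr sum_ennreal)
  also have "\<dots> \<le> (\<Sum>i. hcontent s (U i))"
    using F(1) by (rule sum_le_suminf[OF summableI]) simp
  finally show ?thesis .
qed

lemma hausdorff_measure_pos_if_ball_covers:
  fixes A :: "real set"
  assumes "compact A" "0 < s" "0 < c"
    and "\<And>(F :: nat set) x R. finite F \<Longrightarrow> (\<And>i. i \<in> F \<Longrightarrow> 0 < R i) \<Longrightarrow>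
          A \<subseteq> (\<Union>i\<in>F. ball (x i) (R i)) \<Longrightarrow> c \<le> (\<Sum>i\<in>F. (2 * R i) powr s)"
  shows "0 < hausdorff_measure s A"
proof -
  have "ennreal (c / (2 * 4 powr s)) \<le> hausdorff_delta s 1 A"
    unfolding hausdorff_delta_def using suminf_hcontent_ge_if_ball_covers[OF assms(1-3) _ _ assms(4)]
    by (intro INF_greatest) auto
  also have "\<dots> \<le> hausdorff_measure s A"
    unfolding hausdorff_measure_def by (intro SUP_upper) simp
  finally have "ennreal (c / (2 * 4 powr s)) \<le> hausdorff_measure s A" .
  moreover have "0 < c / (2 * 4 powr s)"
    using assms(3) by simp
  ultimately show ?thesis
    by (metis ennreal_less_zero_iff order_less_le_trans)
qed

section \<open>Strongly separated systems of similarities\<close>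

lemma card_separated_le:
  fixes P :: "real set"
  assumes "P \<subseteq> {lo..hi}" "lo \<le> hi" "0 < e"
    and "\<And>x y. x \<in> P \<Longrightarrow> y \<in> P \<Longrightarrow> x \<noteq> y \<Longrightarrow> e \<le> \<bar>x - y\<bar>"
  shows "real (card P) \<le> (hi - lo) / e + 1"
proof -
  define k where "k x = \<lfloor>(x - lo) / e\<rfloor>" for x
  have "inj_on k P"
  proof (rule inj_onI)
    fix x y assume "x \<in> P" "y \<in> P" "k x = k y"
    then have "\<bar>(x - lo) / e - (y - lo) / e\<bar> < 1"
      unfolding k_def by linarith
    then have "\<bar>x - y\<bar> < e"
      using \<open>0 < e\<close> by (simp add: field_simps abs_less_iff)
    then show "x = y"
      using assms(4)[OF \<open>x \<in> P\<close> \<open>y \<in> P\<close>] by fastforce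
  qed
  moreover have "k ` P \<subseteq> {0..\<lfloor>(hi - lo) / e\<rfloor>}"
    using assms(1,3) by (force simp: k_def intro!: floor_mono divide_right_mono)
  ultimately have "card P \<le> card {0..\<lfloor>(hi - lo) / e\<rfloor>}"
    by (metis card_image card_mono finite_atLeastAtMost_int)
  also have "\<dots> = nat (\<lfloor>(hi - lo) / e\<rfloor> + 1)"
    by simp
  finally have "real (card P) \<le> real (nat (\<lfloor>(hi - lo) / e\<rfloor> + 1))"
    by (rule of_nat_mono)
  moreover have "0 \<le> \<lfloor>(hi - lo) / e\<rfloor>"
    using assms(2,3) by simp
  ultimately show ?thesis
    by linarith
qed

locale strongly_separated_ifs =
  fixes K :: "real set" and J :: "'j set" and T :: "'j \<Rightarrow> real \<Rightarrow> real" and \<rho> :: "'j \<Rightarrow> real"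
  assumes compact_K: "compact K" and K_nonempty: "K \<noteq> {}"
    and finite_J: "finite J" and J_nonempty: "J \<noteq> {}"
    and ratio_bounds: "\<And>j. j \<in> J \<Longrightarrow> 0 < \<rho> j \<and> \<rho> j < 1"
    and similarity: "\<And>j x y. j \<in> J \<Longrightarrow> dist (T j x) (T j y) = \<rho> j * dist x y"
    and maps_into: "\<And>j. j \<in> J \<Longrightarrow> T j ` K \<subseteq> K"
    and pieces_disjoint: "\<And>j k. j \<in> J \<Longrightarrow> k \<in> J \<Longrightarrow> j \<noteq> k \<Longrightarrow> T j ` K \<inter> T k ` K = {}"
begin

abbreviation cylinder :: "'j list \<Rightarrow> real set" where
  "cylinder u \<equiv> word_map T u ` K"

abbreviation word_ratio :: "'j list \<Rightarrow> real" where
  "word_ratio u \<equiv> prod_list (map \<rho> u)"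

definition max_ratio :: real where
  "max_ratio = Max (\<rho> ` J)"

lemma max_ratio_bounds: "0 < max_ratio" "max_ratio < 1"
proof -
  have "max_ratio \<in> \<rho> ` J"
    unfolding max_ratio_def using finite_J J_nonempty by (intro Max_in) auto
  then show "0 < max_ratio" "max_ratio < 1"
    using ratio_bounds by auto
qed

lemma ratio_le_max_ratio: "j \<in> J \<Longrightarrow> \<rho> j \<le> max_ratio"
  using finite_J by (simp add: max_ratio_def)

lemma word_ratio_pos: "set u \<subseteq> J \<Longrightarrow> 0 < word_ratio u"
  using ratio_bounds by (intro prod_list_pos) auto

lemma word_ratio_le_max_ratio_power: "set u \<subseteq> J \<Longrightarrow> word_ratio u \<le> max_ratio ^ length u"
  using prod_list_le_power[of "map \<rho> u" max_ratio] ratio_bounds ratio_le_max_ratio by fastforce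

lemma word_ratio_prefix_le:
  assumes "prefix u v" "set v \<subseteq> J"
  shows "word_ratio v \<le> word_ratio u"
proof -
  obtain z where v: "v = u @ z"
    using assms(1) by (auto simp: prefix_def)
  have "word_ratio z \<le> 1"
    using word_ratio_le_max_ratio_power[of z] max_ratio_bounds v assms(2)
    by (simp add: order_trans[OF _ power_le_one])
  moreover have "0 < word_ratio u"
    using v assms(2) by (intro word_ratio_pos) simp
  ultimately show ?thesis
    using v by (simp add: mult_left_le)
qed

lemma cylinder_subset: "set u \<subseteq> J \<Longrightarrow> cylinder u \<subseteq> K"
  using maps_into by (rule word_map_image_subset)

lemma cylinder_prefix_subset:
  assumes "prefix u v" "set v \<subseteq> J"
  shows "cylinder v \<subseteq> cylinder u"
proof -
  obtain z where v: "v = u @ z"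
    using assms(1) by (auto simp: prefix_def)
  have "cylinder z \<subseteq> K"
    using v assms(2) by (intro cylinder_subset) simp
  then show ?thesis
    unfolding v word_map_append image_comp[symmetric] by (rule image_mono)
qed

lemma dist_word_map: "set u \<subseteq> J \<Longrightarrow> dist (word_map T u x) (word_map T u y) = word_ratio u * dist x y"
  using similarity by (rule word_map_dist)

lemma compact_piece:
  assumes "j \<in> J"
  shows "compact (T j ` K)"
proof -
  have "lipschitz_on (\<rho> j) K (T j)"
    using similarity[OF assms] ratio_bounds[OF assms] by (intro lipschitz_onI) auto
  then show ?thesis
    using compact_K by (metis compact_continuous_image lipschitz_on_continuous_on)
qed

definition gap :: real where
  "gap = Min (insert 1 {setdist (T j ` K) (T k ` K) |j k. j \<in> J \<and> k \<in> J \<and> j \<noteq> k})"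

lemma finite_setdists: "finite {setdist (T j ` K) (T k ` K) |j k. j \<in> J \<and> k \<in> J \<and> j \<noteq> k}"
proof -
  have "{setdist (T j ` K) (T k ` K) |j k. j \<in> J \<and> k \<in> J \<and> j \<noteq> k}
      \<subseteq> (\<lambda>(j, k). setdist (T j ` K) (T k ` K)) ` (J \<times> J)"
    by auto
  then show ?thesis
    using finite_J by (meson finite_SigmaI finite_imageI finite_subset)
qed

lemma gap_pos: "0 < gap"
proof -
  have "0 < setdist (T j ` K) (T k ` K)" if "j \<in> J" "k \<in> J" "j \<noteq> k" for j k
    using setdist_eq_0_compact_closed[OF compact_piece compact_imp_closed[OF compact_piece]]
      setdist_pos_le[of "T j ` K" "T k ` K"] pieces_disjoint K_nonempty that
    by (metis image_is_empty order_le_less)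
  then show ?thesis
    unfolding gap_def using finite_setdists by (subst Min_gr_iff) auto
qed

lemma gap_le_dist:
  assumes "j \<in> J" "k \<in> J" "j \<noteq> k" "x \<in> T j ` K" "y \<in> T k ` K"
  shows "gap \<le> dist x y"
proof -
  have "gap \<le> setdist (T j ` K) (T k ` K)"
    unfolding gap_def using finite_setdists assms(1-3) by (intro Min_le) auto
  also have "\<dots> \<le> dist x y"
    using assms(4,5) by (rule setdist_le_dist)
  finally show ?thesis .
qed

text \<open>Cylinders of the words in \<open>stopping d\<close> have size about \<open>d\<close>, and distinct ones are
  more than \<open>gap * d\<close> apart.\<close>

definition stopping :: "real \<Rightarrow> 'j list set" where
  "stopping d = {u. set u \<subseteq> J \<and> word_ratio u \<le> d \<and> (u = [] \<or> d < word_ratio (butlast u))}"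

lemma finite_stopping:
  assumes "0 < d"
  shows "finite (stopping d)"
proof -
  obtain N where N: "max_ratio ^ N < d"
    using real_arch_pow_inv[OF assms max_ratio_bounds(2)] by blast
  have "length u \<le> N" if "u \<in> stopping d" for u
  proof (rule ccontr)
    assume "\<not> length u \<le> N"
    then have "u \<noteq> []" "N \<le> length (butlast u)"
      by auto
    moreover have "set (butlast u) \<subseteq> J"
      using that by (auto simp: stopping_def dest: in_set_butlastD)
    ultimately have "word_ratio (butlast u) \<le> max_ratio ^ N"
      using word_ratio_le_max_ratio_power max_ratio_bounds
      by (meson less_imp_le order_trans power_decreasing)
    then show False
      using that N \<open>u \<noteq> []\<close> by (auto simp: stopping_def)
  qed
  then have "stopping d \<subseteq> {u. set u \<subseteq> J \<and> length u \<le> N}"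
    by (auto simp: stopping_def)
  then show ?thesis
    using finite_lists_length_le[OF finite_J] by (rule finite_subset)
qed

lemma stopping_not_prefix:
  assumes "u \<in> stopping d" "v \<in> stopping d" "u \<noteq> v"
  shows "\<not> prefix u v"
proof
  assume "prefix u v"
  then obtain z zs where v: "v = u @ z # zs"
    using assms(3) by (metis prefix_order.le_neq_trans strict_prefixE')
  then have "prefix u (butlast v)"
    by (simp add: butlast_append)
  moreover have "set (butlast v) \<subseteq> J"
    using assms(2) by (auto simp: stopping_def dest: in_set_butlastD)
  ultimately have "word_ratio (butlast v) \<le> d"
    using assms(1) word_ratio_prefix_le by (fastforce simp: stopping_def)
  then show False
    using assms(2) v by (simp add: stopping_def)
qed

lemma stopping_dist:
  assumes "u \<in> stopping d" "v \<in> stopping d" "u \<noteq> v" "x \<in> cylinder u" "y \<in> cylinder v"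
  shows "gap * d < dist x y"
proof -
  have "u \<parallel> v"
    using stopping_not_prefix assms(1-3) by blast
  then obtain c j u' k v' where jk: "j \<noteq> k" and u: "u = c @ j # u'" and v: "v = c @ k # v'"
    using parallel_decomp by blast
  have J: "set c \<subseteq> J" "j \<in> J" "set u' \<subseteq> J" "k \<in> J" "set v' \<subseteq> J"
    using assms(1,2) u v by (auto simp: stopping_def)
  have "prefix c (butlast u)"
    using u by (simp add: butlast_append)
  then have "word_ratio (butlast u) \<le> word_ratio c"
    using assms(1) by (intro word_ratio_prefix_le) (auto simp: stopping_def dest: in_set_butlastD)
  then have "d < word_ratio c"
    using assms(1) u by (auto simp: stopping_def)
  obtain a b where a: "a \<in> T j ` cylinder u'" "x = word_map T c a"
    and b: "b \<in> T k ` cylinder v'" "y = word_map T c b"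
    using assms(4,5) u v by (auto simp: word_map_append)
  have "a \<in> T j ` K" "b \<in> T k ` K"
    using a(1) b(1) cylinder_subset J by blast+
  then have "gap \<le> dist a b"
    using gap_le_dist J jk by blast
  have "gap * d < gap * word_ratio c"
    using \<open>d < word_ratio c\<close> gap_pos by simp
  also have "\<dots> \<le> word_ratio c * dist a b"
    using \<open>gap \<le> dist a b\<close> word_ratio_pos[OF J(1)] by (simp add: mult.commute)
  also have "\<dots> = dist x y"
    using a(2) b(2) J(1) by (simp add: dist_word_map)
  finally show ?thesis .
qed

lemma stopping_prefix_exists:
  assumes "set w \<subseteq> J" "word_ratio w \<le> d"
  obtains u where "u \<in> stopping d" "prefix u w"
proof -
  define P where "P k \<longleftrightarrow> word_ratio (take k w) \<le> d" for k
  define k where "k = (LEAST k. P k)"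
  have "P (length w)"
    using assms(2) by (simp add: P_def)
  then have k: "P k" "k \<le> length w"
    unfolding k_def by (auto intro: LeastI Least_le)
  have "d < word_ratio (butlast (take k w))" if "take k w \<noteq> []"
  proof -
    have "\<not> P (k - 1)"
      using that not_less_Least[of "k - 1" P] by (fastforce simp: k_def)
    then show ?thesis
      using k(2) by (simp add: P_def butlast_take)
  qed
  then have "take k w \<in> stopping d"
    using assms(1) k(1) by (auto simp: stopping_def P_def dest: in_set_takeD)
  then show ?thesis
    using that take_is_prefix by blast
qed

lemma card_stopping_meeting_ball:
  assumes "0 < d"
  shows "real (card {u \<in> stopping d. cylinder u \<inter> ball x (d / 2) \<noteq> {}}) \<le> 1 / gap + 1"
proof -
  define M where "M = {u \<in> stopping d. cylinder u \<inter> ball x (d / 2) \<noteq> {}}"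
  define pt where "pt u = (SOME y. y \<in> cylinder u \<inter> ball x (d / 2))" for u
  have pt: "pt u \<in> cylinder u \<inter> ball x (d / 2)" if "u \<in> M" for u
    using that unfolding pt_def M_def by (metis (mono_tags, lifting) ex_in_conv mem_Collect_eq someI_ex)
  have far: "gap * d < dist (pt u) (pt v)" if "u \<in> M" "v \<in> M" "u \<noteq> v" for u v
    using that pt by (intro stopping_dist[of u d v]) (auto simp: M_def)
  have "0 < gap * d"
    using gap_pos assms by simp
  then have "inj_on pt M"
    using far by (force intro: inj_onI)
  then have "card M = card (pt ` M)"
    by (simp add: card_image)
  also have "real \<dots> \<le> ((x + d / 2) - (x - d / 2)) / (gap * d) + 1"
  proof (rule card_separated_le)
    show "pt ` M \<subseteq> {x - d / 2..x + d / 2}"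
    proof
      fix a assume "a \<in> pt ` M"
      then have "dist x a < d / 2"
        using pt by auto
      then show "a \<in> {x - d / 2..x + d / 2}"
        unfolding dist_real_def atLeastAtMost_iff by arith
    qed
    show "gap * d \<le> \<bar>a - b\<bar>" if "a \<in> pt ` M" "b \<in> pt ` M" "a \<noteq> b" for a b
      using that far by (force simp: dist_real_def)
  qed (use assms \<open>0 < gap * d\<close> in auto)
  also have "\<dots> = 1 / gap + 1"
    using assms by simp
  finally show ?thesis
    by (simp add: M_def)
qed

lemma dist_cylinder_le:
  assumes "set w \<subseteq> J" "y \<in> cylinder w" "z \<in> cylinder w"
  shows "dist y z \<le> word_ratio w * diameter K"
proof -
  obtain a b where "a \<in> K" "b \<in> K" "y = word_map T w a" "z = word_map T w b"
    using assms(2,3) by blast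
  then show ?thesis
    using dist_word_map[OF assms(1)] word_ratio_pos[OF assms(1)]
      diameter_bounded_bound[OF compact_imp_bounded[OF compact_K]]
    by (simp add: mult_left_mono)
qed

lemma level_inside_balls:
  assumes "finite F" "\<And>i. i \<in> F \<Longrightarrow> 0 < R i" "K \<subseteq> (\<Union>i\<in>F. ball (x i) (R i))"
  shows "\<exists>L. \<forall>w\<in>words J L. \<exists>i\<in>F. cylinder w \<subseteq> ball (x i) (R i) \<and> word_ratio w \<le> 2 * R i"
proof -
  obtain e where e: "0 < e" "\<And>y. y \<in> K \<Longrightarrow> \<exists>B\<in>(\<lambda>i. ball (x i) (R i)) ` F. ball y e \<subseteq> B"
    using Heine_Borel_lemma[OF compact_K, of "(\<lambda>i. ball (x i) (R i)) ` F"] assms(3) by auto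
  define D where "D = diameter K"
  have "0 \<le> D"
    unfolding D_def using compact_K by (simp add: compact_imp_bounded diameter_ge_0)
  have "F \<noteq> {}"
    using assms(3) K_nonempty by auto
  define \<delta> where "\<delta> = min (e / (D + 1)) (Min ((\<lambda>i. 2 * R i) ` F))"
  have "0 < \<delta>"
    using e(1) \<open>0 \<le> D\<close> assms(1,2) \<open>F \<noteq> {}\<close> by (simp add: \<delta>_def)
  obtain L where L: "max_ratio ^ L < \<delta>"
    using real_arch_pow_inv[OF \<open>0 < \<delta>\<close> max_ratio_bounds(2)] by blast
  show ?thesis
  proof (intro exI ballI)
    fix w assume "w \<in> words J L"
    then have w: "set w \<subseteq> J" and small: "word_ratio w < \<delta>"
      using word_ratio_le_max_ratio_power L by (fastforce simp: words_def)+
    obtain y where y: "y \<in> cylinder w"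
      using K_nonempty by blast
    then obtain i where i: "i \<in> F" "ball y e \<subseteq> ball (x i) (R i)"
      using e(2) cylinder_subset[OF w] by blast
    have "word_ratio w * D \<le> e / (D + 1) * D"
      using small \<open>0 \<le> D\<close> by (intro mult_right_mono) (auto simp: \<delta>_def)
    also have "\<dots> < e"
      using e(1) \<open>0 \<le> D\<close> by (simp add: field_simps)
    finally have "cylinder w \<subseteq> ball y e"
      using dist_cylinder_le[OF w y] by (force simp: D_def)
    then have "cylinder w \<subseteq> ball (x i) (R i)"
      using i(2) by blast
    moreover have "Min ((\<lambda>i. 2 * R i) ` F) \<le> 2 * R i"
      using i(1) assms(1) by (intro Min_le) auto
    then have "word_ratio w \<le> 2 * R i"
      using small by (simp add: \<delta>_def)
    ultimately show "\<exists>i\<in>F. cylinder w \<subseteq> ball (x i) (R i) \<and> word_ratio w \<le> 2 * R i"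
      using i(1) by blast
  qed
qed

lemma level_stopping_cover:
  assumes "finite F" "\<And>i. i \<in> F \<Longrightarrow> 0 < R i" "K \<subseteq> (\<Union>i\<in>F. ball (x i) (R i))"
  shows "\<exists>L. \<forall>w\<in>words J L. \<exists>i\<in>F. \<exists>u\<in>{u \<in> stopping (2 * R i). cylinder u \<inter> ball (x i) (R i) \<noteq> {}}.
    prefix u w"
proof -
  obtain L where L: "\<And>w. w \<in> words J L \<Longrightarrow> \<exists>i\<in>F. cylinder w \<subseteq> ball (x i) (R i) \<and> word_ratio w \<le> 2 * R i"
    using level_inside_balls[OF assms] by blast
  have "\<exists>i\<in>F. \<exists>u\<in>{u \<in> stopping (2 * R i). cylinder u \<inter> ball (x i) (R i) \<noteq> {}}. prefix u w"
    if w_level: "w \<in> words J L" for w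
  proof -
    have w: "set w \<subseteq> J"
      using w_level by (simp add: words_def)
    obtain i where i: "i \<in> F" "cylinder w \<subseteq> ball (x i) (R i)" "word_ratio w \<le> 2 * R i"
      using L[OF w_level] by blast
    obtain u where u: "u \<in> stopping (2 * R i)" "prefix u w"
      using stopping_prefix_exists[OF w i(3)] by blast
    have "cylinder w \<subseteq> cylinder u \<inter> ball (x i) (R i)"
      using cylinder_prefix_subset[OF u(2) w] i(2) by blast
    then show ?thesis
      using i(1) u K_nonempty by blast
  qed
  then show ?thesis
    by blast
qed

text \<open>The Bernoulli measure of cylinders for the weights \<open>\<rho> j powr t\<close>, normalized to sum to one.\<close>

definition mass :: "real \<Rightarrow> 'j list \<Rightarrow> real" where
  "mass t u = prod_list (map (\<lambda>j. \<rho> j powr t / (\<Sum>i\<in>J. \<rho> i powr t)) u)"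

lemma mass_nonneg: "0 \<le> mass t u"
  unfolding mass_def by (intro prod_list_nonneg) (auto simp: sum_nonneg)

lemma sum_normalized_weights: "(\<Sum>j\<in>J. \<rho> j powr t / (\<Sum>i\<in>J. \<rho> i powr t)) = 1"
proof -
  have "0 < \<rho> i powr t" if "i \<in> J" for i
    using ratio_bounds[OF that] by simp
  then have "0 < (\<Sum>i\<in>J. \<rho> i powr t)"
    using finite_J J_nonempty by (intro sum_pos) auto
  then show ?thesis
    by (simp add: sum_divide_distrib[symmetric])
qed

lemma sum_mass_words: "(\<Sum>w\<in>words J n. mass t w) = 1"
  unfolding mass_def using finite_J by (simp add: sum_prod_list_words sum_normalized_weights)

lemma sum_mass_prefix_le: "(\<Sum>w\<in>{w \<in> words J n. prefix u w}. mass t w) \<le> mass t u"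
  unfolding mass_def using finite_J sum_normalized_weights
  by (rule sum_prod_list_words_prefix_le) (simp add: sum_nonneg)

lemma mass_le:
  assumes "1 \<le> (\<Sum>j\<in>J. \<rho> j powr t)" "set u \<subseteq> J"
  shows "mass t u \<le> word_ratio u powr t"
  using assms(2)
proof (induction u)
  case (Cons j u)
  then have "j \<in> J" "set u \<subseteq> J"
    by auto
  have weight_le: "\<rho> j powr t / (\<Sum>i\<in>J. \<rho> i powr t) \<le> \<rho> j powr t"
    using assms(1) by (simp add: divide_le_eq mult_le_cancel_left1)
  have "mass t (j # u) = \<rho> j powr t / (\<Sum>i\<in>J. \<rho> i powr t) * mass t u"
    by (simp add: mass_def)
  also have "\<dots> \<le> \<rho> j powr t * word_ratio u powr t"
    by (rule mult_mono[OF weight_le Cons.IH[OF \<open>set u \<subseteq> J\<close>]]) (simp_all add: mass_nonneg)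
  also have "\<dots> = word_ratio (j # u) powr t"
    using ratio_bounds[OF \<open>j \<in> J\<close>] word_ratio_pos[OF \<open>set u \<subseteq> J\<close>] by (simp add: powr_mult)
  finally show ?case .
qed (simp add: mass_def)

lemma sum_mass_prefix_cover_ge:
  assumes "finite F" "\<And>i. i \<in> F \<Longrightarrow> finite (M i)" "\<And>w. w \<in> words J L \<Longrightarrow> \<exists>i\<in>F. \<exists>u\<in>M i. prefix u w"
  shows "1 \<le> (\<Sum>i\<in>F. \<Sum>u\<in>M i. mass t u)"
proof -
  have "1 = (\<Sum>w\<in>words J L. mass t w)"
    by (simp add: sum_mass_words)
  also have "\<dots> \<le> (\<Sum>w\<in>words J L. \<Sum>i\<in>F. \<Sum>u\<in>{u \<in> M i. prefix u w}. mass t w)"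
  proof (rule sum_mono)
    fix w assume "w \<in> words J L"
    then obtain i u where iu: "i \<in> F" "u \<in> M i" "prefix u w"
      using assms(3) by blast
    have "mass t w \<le> (\<Sum>u\<in>{u \<in> M i. prefix u w}. mass t w)"
      using iu assms(2) mass_nonneg by (intro member_le_sum[where i = u, simplified]) auto
    also have "\<dots> \<le> (\<Sum>i\<in>F. \<Sum>u\<in>{u \<in> M i. prefix u w}. mass t w)"
      using iu(1) assms(1) mass_nonneg by (intro member_le_sum sum_nonneg) auto
    finally show "mass t w \<le> (\<Sum>i\<in>F. \<Sum>u\<in>{u \<in> M i. prefix u w}. mass t w)" .
  qed
  also have "\<dots> = (\<Sum>i\<in>F. \<Sum>u\<in>M i. \<Sum>w\<in>{w \<in> words J L. prefix u w}. mass t w)"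
    using finite_words[OF finite_J] assms(2)
    by (subst sum.swap) (intro sum.cong refl sum.swap_restrict, auto)
  also have "\<dots> \<le> (\<Sum>i\<in>F. \<Sum>u\<in>M i. mass t u)"
    by (intro sum_mono sum_mass_prefix_le)
  finally show ?thesis .
qed

lemma ball_cover_sum_ge:
  assumes "0 < t" "1 \<le> (\<Sum>j\<in>J. \<rho> j powr t)"
    and "finite F" "\<And>i. i \<in> F \<Longrightarrow> 0 < R i" "K \<subseteq> (\<Union>i\<in>F. ball (x i) (R i))"
  shows "1 / (1 / gap + 1) \<le> (\<Sum>i\<in>F. (2 * R i) powr t)"
proof -
  define M where "M i = {u \<in> stopping (2 * R i). cylinder u \<inter> ball (x i) (R i) \<noteq> {}}" for i
  have finite_M: "finite (M i)" if "i \<in> F" for i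
    using finite_stopping[of "2 * R i"] assms(4)[OF that] by (simp add: M_def)
  obtain L where "\<And>w. w \<in> words J L \<Longrightarrow> \<exists>i\<in>F. \<exists>u\<in>M i. prefix u w"
    using level_stopping_cover[OF assms(3-5)] unfolding M_def by blast
  then have "1 \<le> (\<Sum>i\<in>F. \<Sum>u\<in>M i. mass t u)"
    using assms(3) finite_M by (intro sum_mass_prefix_cover_ge)
  also have "\<dots> \<le> (\<Sum>i\<in>F. \<Sum>u\<in>M i. (2 * R i) powr t)"
  proof (intro sum_mono)
    fix i u assume "i \<in> F" "u \<in> M i"
    then have u: "set u \<subseteq> J" "word_ratio u \<le> 2 * R i"
      by (auto simp: M_def stopping_def)
    have "mass t u \<le> word_ratio u powr t"
      using assms(2) u(1) by (rule mass_le)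
    also have "\<dots> \<le> (2 * R i) powr t"
      using u word_ratio_pos[OF u(1)] assms(1) by (intro powr_mono2) auto
    finally show "mass t u \<le> (2 * R i) powr t" .
  qed
  also have "\<dots> \<le> (\<Sum>i\<in>F. (1 / gap + 1) * (2 * R i) powr t)"
  proof (intro sum_mono)
    fix i assume "i \<in> F"
    then have "real (card (M i)) \<le> 1 / gap + 1"
      using card_stopping_meeting_ball[of "2 * R i" "x i"] assms(4) by (simp add: M_def)
    then show "(\<Sum>u\<in>M i. (2 * R i) powr t) \<le> (1 / gap + 1) * (2 * R i) powr t"
      by (simp add: mult_right_mono)
  qed
  finally have "1 \<le> (1 / gap + 1) * (\<Sum>i\<in>F. (2 * R i) powr t)"
    by (simp add: sum_distrib_left)
  moreover have "0 < 1 / gap + 1"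
    using gap_pos by (simp add: add_pos_pos)
  ultimately show ?thesis
    by (simp add: divide_le_eq mult.commute)
qed

theorem hausdorff_measure_pos:
  assumes "0 < t" "1 \<le> (\<Sum>j\<in>J. \<rho> j powr t)"
  shows "0 < hausdorff_measure t K"
proof (rule hausdorff_measure_pos_if_ball_covers[OF compact_K assms(1)])
  show "0 < 1 / (1 / gap + 1)"
    using gap_pos by (simp add: add_pos_pos)
qed (rule ball_cover_sum_ge[OF assms])

end

section \<open>Self-similar covers\<close>

lemma similarity_image_bounded:
  fixes f :: "real \<Rightarrow> real"
  assumes "bounded K" "0 \<le> c" "\<And>x y. x \<in> K \<Longrightarrow> y \<in> K \<Longrightarrow> dist (f x) (f y) = c * dist x y"
  shows "bounded (f ` K)" "diameter (f ` K) \<le> c * diameter K"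
proof -
  have bound: "dist (f x) (f y) \<le> c * diameter K" if "x \<in> K" "y \<in> K" for x y
    using assms that by (simp add: diameter_bounded_bound mult_left_mono)
  show "bounded (f ` K)"
  proof (cases "K = {}")
    case False
    then obtain x where "x \<in> K"
      by blast
    then show ?thesis
      unfolding bounded_def using bound by blast
  qed simp
  show "diameter (f ` K) \<le> c * diameter K"
    using bound assms(1,2) by (intro diameter_le) (auto simp: dist_norm diameter_ge_0)
qed

lemma subset_Union_word_images:
  assumes "K \<subseteq> (\<Union>j\<in>J. S j ` K)"
  shows "K \<subseteq> (\<Union>w\<in>words J n. word_map S w ` K)"
proof (induction n)
  case (Suc n)
  show ?case
  proof
    fix x assume "x \<in> K"
    then obtain j y where "j \<in> J" "y \<in> K" "x = S j y"
      using assms by blast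
    moreover obtain w z where "w \<in> words J n" "z \<in> K" "y = word_map S w z"
      using Suc.IH \<open>y \<in> K\<close> by blast
    ultimately have "j # w \<in> words J (Suc n)" "x = word_map S (j # w) z"
      by (auto simp: words_def)
    then show "x \<in> (\<Union>w\<in>words J (Suc n). word_map S w ` K)"
      using \<open>z \<in> K\<close> by blast
  qed
qed simp

lemma sum_words_prod_list_powr:
  fixes \<rho> :: "'j \<Rightarrow> real"
  assumes "finite J" "\<And>j. j \<in> J \<Longrightarrow> 0 \<le> \<rho> j" "0 \<le> D"
  shows "(\<Sum>w\<in>words J n. (prod_list (map \<rho> w) * D) powr t) = D powr t * (\<Sum>j\<in>J. \<rho> j powr t) ^ n"
proof -
  have "(prod_list (map \<rho> w) * D) powr t = D powr t * prod_list (map (\<lambda>j. \<rho> j powr t) w)"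
    if "w \<in> words J n" for w
  proof -
    have "\<And>j. j \<in> set w \<Longrightarrow> 0 \<le> \<rho> j"
      using that assms(2) by (auto simp: words_def)
    then show ?thesis
      using assms(3) by (simp add: powr_mult prod_list_nonneg prod_list_map_powr)
  qed
  then have "(\<Sum>w\<in>words J n. (prod_list (map \<rho> w) * D) powr t)
      = D powr t * (\<Sum>w\<in>words J n. prod_list (map (\<lambda>j. \<rho> j powr t) w))"
    by (simp add: sum_distrib_left)
  also have "\<dots> = D powr t * (\<Sum>j\<in>J. \<rho> j powr t) ^ n"
    using assms(1) by (simp add: sum_prod_list_words)
  finally show ?thesis .
qed

lemma hausdorff_delta_self_similar_le:
  fixes K :: "real set"
  assumes "bounded K" "finite J" "K \<subseteq> (\<Union>j\<in>J. S j ` K)"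
    and "\<And>j x y. j \<in> J \<Longrightarrow> dist (S j x) (S j y) = \<rho> j * dist x y"
    and "\<And>j. j \<in> J \<Longrightarrow> 0 \<le> \<rho> j \<and> \<rho> j \<le> m" "0 \<le> m" "m ^ n * diameter K \<le> \<delta>" "0 < t"
  shows "hausdorff_delta t \<delta> K \<le> ennreal (diameter K powr t * (\<Sum>j\<in>J. \<rho> j powr t) ^ n)"
proof -
  have "0 \<le> diameter K"
    using assms(1) by (rule diameter_ge_0)
  have ratio: "0 \<le> prod_list (map \<rho> w)" "prod_list (map \<rho> w) \<le> m ^ n" if "w \<in> words J n" for w
  proof -
    have "\<forall>j\<in>set w. 0 \<le> \<rho> j \<and> \<rho> j \<le> m" "length w = n"
      using that assms(5) by (auto simp: words_def)
    then show "0 \<le> prod_list (map \<rho> w)" "prod_list (map \<rho> w) \<le> m ^ n"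
      using prod_list_le_power[of "map \<rho> w" m] by (auto intro!: prod_list_nonneg)
  qed
  have image: "bounded (word_map S w ` K) \<and> diameter (word_map S w ` K) \<le> prod_list (map \<rho> w) * diameter K"
    if "w \<in> words J n" for w
  proof -
    have "set w \<subseteq> J"
      using that by (simp add: words_def)
    with assms(4) have "dist (word_map S w x) (word_map S w y) = prod_list (map \<rho> w) * dist x y" for x y
      by (rule word_map_dist)
    then show ?thesis
      using similarity_image_bounded[OF assms(1) ratio(1)[OF that]] by simp
  qed
  have "hausdorff_delta t \<delta> K \<le> (\<Sum>w\<in>words J n. hcontent t (word_map S w ` K))"
  proof (rule hausdorff_delta_le_finite_cover[OF finite_words[OF assms(2)] subset_Union_word_images[OF assms(3)]])
    show "0 \<le> \<delta>"
      using assms(6,7) \<open>0 \<le> diameter K\<close> by (meson order_trans zero_le_mult_iff zero_le_power)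
    show "bounded (word_map S w ` K) \<and> diameter (word_map S w ` K) \<le> \<delta>" if "w \<in> words J n" for w
      using image[OF that] mult_right_mono[OF ratio(2)[OF that] \<open>0 \<le> diameter K\<close>] assms(7)
      by linarith
  qed
  also have "\<dots> \<le> (\<Sum>w\<in>words J n. ennreal ((prod_list (map \<rho> w) * diameter K) powr t))"
    using image ratio \<open>0 < t\<close>
    by (intro sum_mono) (simp add: hcontent_eq_powr ennreal_leI powr_mono2 diameter_ge_0)
  also have "\<dots> = ennreal (\<Sum>w\<in>words J n. (prod_list (map \<rho> w) * diameter K) powr t)"
    by (simp add: sum_ennreal)
  also have "\<dots> = ennreal (diameter K powr t * (\<Sum>j\<in>J. \<rho> j powr t) ^ n)"
    using assms(2,5) \<open>0 \<le> diameter K\<close> by (simp add: sum_words_prod_list_powr)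
  finally show ?thesis .
qed

lemma lt_1_if_sum_powr_lt_1:
  fixes \<rho> :: "'j \<Rightarrow> real"
  assumes "finite J" "0 < t" "(\<Sum>j\<in>J. \<rho> j powr t) < 1" "j \<in> J"
  shows "\<rho> j < 1"
proof (rule ccontr)
  assume "\<not> \<rho> j < 1"
  then have "1 \<le> \<rho> j powr t"
    using assms(2) by (simp add: ge_one_powr_ge_zero)
  also have "\<dots> \<le> (\<Sum>j\<in>J. \<rho> j powr t)"
    using assms(1,4) by (intro member_le_sum) auto
  finally show False
    using assms(3) by simp
qed

lemma hausdorff_measure_self_similar_eq_0:
  fixes K :: "real set"
  assumes "bounded K" "finite J" "K \<subseteq> (\<Union>j\<in>J. S j ` K)"
    and "\<And>j x y. j \<in> J \<Longrightarrow> dist (S j x) (S j y) = \<rho> j * dist x y"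
    and "\<And>j. j \<in> J \<Longrightarrow> 0 \<le> \<rho> j" "0 < t" "(\<Sum>j\<in>J. \<rho> j powr t) < 1"
  shows "hausdorff_measure t K = 0"
proof -
  define m where "m = Max (insert 0 (\<rho> ` J))"
  have "\<rho> j < 1" if "j \<in> J" for j
    using assms(2,6,7) that by (rule lt_1_if_sum_powr_lt_1)
  then have m: "0 \<le> m" "m < 1" "\<And>j. j \<in> J \<Longrightarrow> \<rho> j \<le> m"
    using assms(2) by (auto simp: m_def)
  define D where "D = diameter K"
  define \<Lambda> where "\<Lambda> = (\<Sum>j\<in>J. \<rho> j powr t)"
  have "0 \<le> \<Lambda>"
    by (simp add: \<Lambda>_def sum_nonneg)
  have "hausdorff_delta t \<delta> K = 0" if "0 < \<delta>" for \<delta>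
  proof (rule antisym[OF ennreal_le_epsilon], simp_all)
    fix e :: real assume "0 < e"
    have "(\<lambda>n. m ^ n * D) \<longlonglongrightarrow> 0" "(\<lambda>n. D powr t * \<Lambda> ^ n) \<longlonglongrightarrow> 0"
      using m assms(7) \<open>0 \<le> \<Lambda>\<close> by (auto simp: \<Lambda>_def intro!: tendsto_mult_left_zero
          tendsto_mult_right_zero LIMSEQ_power_zero)
    then have "eventually (\<lambda>n. m ^ n * D < \<delta> \<and> D powr t * \<Lambda> ^ n < e) sequentially"
      using \<open>0 < \<delta>\<close> \<open>0 < e\<close> by (auto intro: eventually_conj order_tendstoD(2))
    then obtain n where n: "m ^ n * D < \<delta>" "D powr t * \<Lambda> ^ n < e"
      by (auto simp: eventually_sequentially)
    have "hausdorff_delta t \<delta> K \<le> ennreal (D powr t * \<Lambda> ^ n)"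
      unfolding D_def \<Lambda>_def using assms(1-6) m n(1)
      by (intro hausdorff_delta_self_similar_le) (auto simp: D_def)
    also have "\<dots> \<le> ennreal e"
      using n(2) by (intro ennreal_leI) simp
    finally show "hausdorff_delta t \<delta> K \<le> ennreal e" .
  qed
  then show ?thesis
    by (simp add: hausdorff_measure_eq_0_iff)
qed

lemma self_covering_subset_cball:
  fixes K :: "'a :: metric_space set"
  assumes "compact K" "K \<noteq> {}" "K \<subseteq> (\<Union>i\<in>I. S i ` K)"
    and "\<And>i. i \<in> I \<Longrightarrow> 0 \<le> \<rho> i \<and> \<rho> i < 1"
    and "\<And>i y. i \<in> I \<Longrightarrow> dist (S i y) c \<le> \<rho> i * dist y c + (1 - \<rho> i) * R"
  shows "K \<subseteq> cball c R"
proof -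
  have "continuous_on K (\<lambda>y. dist y c)"
    by (intro continuous_intros)
  then obtain x where x: "x \<in> K" and max: "\<And>y. y \<in> K \<Longrightarrow> dist y c \<le> dist x c"
    using continuous_attains_sup[OF assms(1,2)] by blast
  obtain i y where i: "i \<in> I" and y: "y \<in> K" "x = S i y"
    using assms(3) x by blast
  have "\<rho> i * dist y c \<le> \<rho> i * dist x c"
    using max[OF y(1)] assms(4)[OF i] by (simp add: mult_left_mono)
  then have "dist x c \<le> \<rho> i * dist x c + (1 - \<rho> i) * R"
    using assms(5)[OF i, of y] y(2) by simp
  then have "(1 - \<rho> i) * dist x c \<le> (1 - \<rho> i) * R"
    by (simp add: algebra_simps)
  then have "dist x c \<le> R"
    using assms(4)[OF i] by simp
  then show ?thesis
    using max by (force simp: dist_commute)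
qed

section \<open>The six-map system\<close>

text \<open>The words without a suffix \<open>3 1^k\<close>. Among the cylinders of words starting with \<open>3\<close>,
  only those of \<open>3 1^k\<close> contain \<open>h = S 3 0\<close>, the one point shared by \<open>S 3 ` K\<close> and
  \<open>S 4 ` K\<close>; so the cylinders of good words of equal length are pairwise disjoint.\<close>

primrec good_words :: "nat \<Rightarrow> nat list set" where
  "good_words 0 = {[]}"
| "good_words (Suc n) = (\<lambda>(j, w). j # w) ` ({1, 2, 4, 5, 6} \<times> good_words n)
      \<union> (#) 3 ` (good_words n - {replicate n 1})"

lemma good_words_subset_words: "good_words n \<subseteq> words {1..6} n"
proof (induction n)
  case (Suc n)
  then show ?case
    by (fastforce simp: words_def)
qed simp

lemma good_words_SucE:
  assumes "w \<in> good_words (Suc n)"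
  obtains i v where "w = i # v" "i \<in> {1..6}" "v \<in> good_words n" "i = 3 \<longrightarrow> v \<noteq> replicate n 1"
  using assms by force

lemma replicate_in_good_words: "replicate n 1 \<in> good_words n"
  by (induction n) auto

lemma finite_good_words: "finite (good_words n)"
  by (induction n) auto

lemma sum_prod_list_good_words:
  fixes f :: "nat \<Rightarrow> real"
  defines "\<Lambda> \<equiv> sum f {1..6}"
  defines "\<beta> \<equiv> f 3 / (\<Lambda> - f 1)"
  assumes "\<Lambda> \<noteq> f 1"
  shows "(\<Sum>w\<in>good_words n. prod_list (map f w)) = (1 - \<beta>) * \<Lambda> ^ n + \<beta> * f 1 ^ n"
proof (induction n)
  case (Suc n)
  define s where "s = (\<Sum>w\<in>good_words n. prod_list (map f w))"
  have inj: "inj_on (\<lambda>(j, w). j # w) ({1, 2, 4, 5, 6} \<times> good_words n)" "inj ((#) (3 :: nat))"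
    by (auto simp: inj_on_def)
  have "(\<lambda>(j, w). j # w) ` ({1, 2, 4, 5, 6} \<times> good_words n) \<inter> (#) 3 ` (good_words n - {replicate n 1}) = {}"
    by auto
  then have "(\<Sum>w\<in>good_words (Suc n). prod_list (map f w))
      = (\<Sum>(j, w)\<in>{1, 2, 4, 5, 6} \<times> good_words n. f j * prod_list (map f w))
        + (\<Sum>w\<in>good_words n - {replicate n 1}. f 3 * prod_list (map f w))"
    using inj finite_good_words
    by (simp add: sum.union_disjoint sum.reindex inj_on_subset case_prod_unfold)
  also have "\<dots> = (\<Lambda> - f 3) * s + f 3 * (s - f 1 ^ n)"
  proof -
    have "{1..6 :: nat} = {1, 2, 3, 4, 5, 6}"
      by auto
    then have "(\<Sum>j\<in>{1, 2, 4, 5, 6 :: nat}. f j) = \<Lambda> - f 3"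
      by (simp add: \<Lambda>_def)
    moreover have "(\<Sum>(j, w)\<in>{1, 2, 4, 5, 6} \<times> good_words n. f j * prod_list (map f w))
        = (\<Sum>j\<in>{1, 2, 4, 5, 6 :: nat}. f j) * s"
      by (simp only: s_def sum_product sum.cartesian_product)
    moreover have "(\<Sum>w\<in>good_words n - {replicate n 1}. f 3 * prod_list (map f w)) = f 3 * (s - f 1 ^ n)"
      using finite_good_words replicate_in_good_words
      by (simp add: s_def sum_distrib_left[symmetric] sum_diff1)
    ultimately show ?thesis
      by simp
  qed
  also have "\<dots> = (1 - \<beta>) * \<Lambda> ^ Suc n + (\<beta> * \<Lambda> - f 3) * f 1 ^ n"
    by (simp add: s_def Suc.IH algebra_simps)
  also have "\<beta> * \<Lambda> - f 3 = \<beta> * f 1"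
    using assms(3) by (simp add: \<beta>_def field_simps)
  finally show ?case
    by simp
qed simp

locale pqr_ifs =
  fixes p q r h a :: real and S :: "nat \<Rightarrow> real \<Rightarrow> real" and K :: "real set"
  assumes p: "0 < p" "p < 1/36" and q: "0 < q" "q < 1/36" and r: "0 < r" "r < 1/36"
    and h: "h = 8/15" and a: "a = 3/15"
    and S1: "S 1 = (\<lambda>x. p * x)" and S2: "S 2 = (\<lambda>x. a + r * x)" and S3: "S 3 = (\<lambda>x. h - q * x)"
    and S4: "S 4 = (\<lambda>x. h - r + r * x)" and S5: "S 5 = (\<lambda>x. 1 - a - r * x)"
    and S6: "S 6 = (\<lambda>x. 1 - r + r * x)"
    and attractor: "is_attractor S {1..6} K"
    and touching: "S 3 ` K \<inter> S 4 ` K = {h}"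
begin

lemma compact_K: "compact K" and K_nonempty: "K \<noteq> {}" and K_eq: "K = (\<Union>i\<in>{1..6}. S i ` K)"
  using attractor by (auto simp: is_attractor_def)

lemma index_cases:
  assumes "i \<in> {1..6 :: nat}"
  obtains "i = 1" | "i = 2" | "i = 3" | "i = 4" | "i = 5" | "i = 6"
  using assms by force

definition ratio :: "nat \<Rightarrow> real" where
  "ratio i = (if i = 1 then p else if i = 3 then q else r)"

definition moran_sum :: "real \<Rightarrow> real" where
  "moran_sum t = p powr t + q powr t + 4 * r powr t"

lemma ratio_bounds: "i \<in> {1..6} \<Longrightarrow> 0 < ratio i \<and> ratio i \<le> 1/36"
  using p q r by (auto simp: ratio_def)

lemma sum_ratio_powr: "(\<Sum>i\<in>{1..6}. ratio i powr t) = moran_sum t"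
proof -
  have "{1..6 :: nat} = {1, 2, 3, 4, 5, 6}"
    by auto
  then show ?thesis
    by (simp add: ratio_def moran_sum_def)
qed

lemma S_diff:
  assumes "i \<in> {1..6}"
  shows "S i x - S i y = (if i \<in> {3, 5} then - ratio i else ratio i) * (x - y)"
  \<comment> \<open>\<open>S1\<close>-\<open>S6\<close> must be applied before the simplifier rewrites the numeral \<open>1\<close> to \<open>Suc 0\<close>\<close>
  using assms
  by (cases rule: index_cases; simp only: S1 S2 S3 S4 S5 S6; simp add: ratio_def algebra_simps)

lemma dist_S: "i \<in> {1..6} \<Longrightarrow> dist (S i x) (S i y) = ratio i * dist x y"
  using ratio_bounds[of i] by (simp add: dist_real_def S_diff abs_mult)

lemma S_inj: "i \<in> {1..6} \<Longrightarrow> inj (S i)"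
  using ratio_bounds[of i] dist_S[of i] by (intro injI) (metis dist_eq_0_iff mult_eq_0_iff order_less_irrefl)

lemma S_center:
  assumes "i \<in> {1..6}"
  shows "dist (S i (1/2)) (1/2) \<le> (1 - ratio i) / 2"
  using assms p q r
  by (cases rule: index_cases; simp only: S1 S2 S3 S4 S5 S6; simp add: ratio_def h a dist_real_def)

lemma K_subset_unit_interval: "K \<subseteq> {0..1}"
proof -
  have "K \<subseteq> cball (1/2) (1/2)"
  proof (rule self_covering_subset_cball[OF compact_K K_nonempty])
    show "K \<subseteq> (\<Union>i\<in>{1..6}. S i ` K)"
      using K_eq by blast
    show "0 \<le> ratio i \<and> ratio i < 1" if "i \<in> {1..6}" for i
      using ratio_bounds[OF that] by simp
    show "dist (S i y) (1/2) \<le> ratio i * dist y (1/2) + (1 - ratio i) * (1/2)" if "i \<in> {1..6}" for i y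
      using dist_triangle[of "S i y" "1/2" "S i (1/2)"] dist_S[OF that, of y "1/2"] S_center[OF that]
      by linarith
  qed
  then show ?thesis
    by (simp add: cball_eq_atLeastAtMost)
qed

definition region :: "real \<Rightarrow> nat" where
  "region z = (if z < 1/10 then 1 else if z < 3/10 then 2 else if z < 6/10 then 3 else if z < 9/10 then 5 else 6)"

lemma region_S:
  assumes "i \<in> {1..6}" "y \<in> {0..1}"
  shows "region (S i y) = (if i = 4 then 3 else i)"
proof -
  have "0 \<le> c * y \<and> c * y < 1/36" if "0 < c" "c < 1/36" for c :: real
  proof -
    have "0 \<le> c * y" "c * y \<le> c"
      using assms(2) that(1) by (simp_all add: mult_left_le)
    then show ?thesis
      using that(2) by linarith
  qed
  from assms(1) this[OF p] this[OF q] this[OF r] show ?thesis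
    using p q r by (cases rule: index_cases; simp only: S1 S2 S3 S4 S5 S6; simp add: region_def h a)
qed

lemma S_images_disjoint:
  assumes "i \<in> {1..6}" "j \<in> {1..6}" "{i, j} \<noteq> {3, 4}" "i \<noteq> j" "A \<subseteq> {0..1}" "B \<subseteq> {0..1}"
  shows "S i ` A \<inter> S j ` B = {}"
proof -
  have "(if i = 4 then 3 else i) \<noteq> (if j = 4 then 3 else j)"
    using assms(3,4) by (auto simp: doubleton_eq_iff)
  then have "S i x \<noteq> S j y" if "x \<in> A" "y \<in> B" for x y
  proof -
    have "x \<in> {0..1}" "y \<in> {0..1}"
      using assms(5,6) that by blast+
    then have "region (S i x) \<noteq> region (S j y)"
      using region_S assms(1,2) \<open>(if i = 4 then 3 else i) \<noteq> (if j = 4 then 3 else j)\<close> by simp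
    then show ?thesis
      by metis
  qed
  then show ?thesis
    by blast
qed

lemma S_maps_into: "i \<in> {1..6} \<Longrightarrow> S i ` K \<subseteq> K"
  using K_eq by blast

lemma cylinder_subset_unit_interval:
  assumes "set u \<subseteq> {1..6}"
  shows "word_map S u ` K \<subseteq> {0..1}"
proof -
  have "word_map S u ` K \<subseteq> K"
    using S_maps_into assms by (rule word_map_image_subset)
  then show ?thesis
    using K_subset_unit_interval by blast
qed

lemma zero_in_cylinder:
  "set u \<subseteq> {1..6} \<Longrightarrow> 0 \<in> word_map S u ` K \<Longrightarrow> u = replicate (length u) 1"
proof (induction u)
  case (Cons i u)
  from Cons.prems(2) obtain z where z: "z \<in> word_map S u ` K" "S i z = 0"
    by (auto simp: image_iff)
  have "set u \<subseteq> {1..6}"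
    using Cons.prems(1) by simp
  then have "z \<in> {0..1}"
    using z(1) cylinder_subset_unit_interval by blast
  then have "i = 1"
    using region_S[of i z] z(2) Cons.prems(1) by (auto simp: region_def split: if_splits)
  then have "p * z = 0"
    using z(2)[unfolded \<open>i = 1\<close> S1] by simp
  then have "z = 0"
    using p(1) by simp
  then have "u = replicate (length u) 1"
    using Cons.IH Cons.prems(1) z(1) by simp
  then show ?case
    using \<open>i = 1\<close> by (metis length_Cons replicate_Suc)
qed simp

lemma touching_cylinders_disjoint:
  assumes "set u \<subseteq> {1..6}" "u \<noteq> replicate (length u) 1" "set v \<subseteq> {1..6}"
  shows "S 3 ` word_map S u ` K \<inter> S 4 ` word_map S v ` K = {}"
proof -
  have "h \<notin> S 3 ` word_map S u ` K"
  proof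
    assume "h \<in> S 3 ` word_map S u ` K"
    then obtain z where z: "z \<in> word_map S u ` K" "h = S 3 z"
      by blast
    then have "z = 0"
      using q(1) by (simp add: S3)
    with z(1) have "0 \<in> word_map S u ` K"
      by simp
    then show False
      using zero_in_cylinder assms(1,2) by blast
  qed
  moreover have "word_map S u ` K \<subseteq> K"
    using S_maps_into assms(1) by (rule word_map_image_subset)
  moreover have "word_map S v ` K \<subseteq> K"
    using S_maps_into assms(3) by (rule word_map_image_subset)
  ultimately have "S 3 ` word_map S u ` K \<inter> S 4 ` word_map S v ` K \<subseteq> {h} - {h}"
    using touching by blast
  then show ?thesis
    by blast
qed

lemma good_words_cylinders_disjoint:
  "u \<in> good_words n \<Longrightarrow> v \<in> good_words n \<Longrightarrow> u \<noteq> v \<Longrightarrow> word_map S u ` K \<inter> word_map S v ` K = {}"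
proof (induction n arbitrary: u v)
  case (Suc n)
  obtain i u' where u: "u = i # u'" "i \<in> {1..6}" "u' \<in> good_words n"
    and u3: "i = 3 \<longrightarrow> u' \<noteq> replicate n 1"
    using Suc.prems(1) by (rule good_words_SucE)
  obtain j v' where v: "v = j # v'" "j \<in> {1..6}" "v' \<in> good_words n"
    and v3: "j = 3 \<longrightarrow> v' \<noteq> replicate n 1"
    using Suc.prems(2) by (rule good_words_SucE)
  have words: "set u' \<subseteq> {1..6}" "length u' = n" "set v' \<subseteq> {1..6}" "length v' = n"
    using u(3) v(3) good_words_subset_words by (auto simp: words_def)
  have images: "word_map S u ` K = S i ` word_map S u' ` K" "word_map S v ` K = S j ` word_map S v' ` K"
    unfolding u(1) v(1) by (simp_all add: image_comp)
  consider "i = j" | "{i, j} = {3, 4}" | "i \<noteq> j" "{i, j} \<noteq> {3, 4}"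
    by blast
  then show ?case
  proof cases
    case 1
    then have "word_map S u' ` K \<inter> word_map S v' ` K = {}"
      using Suc u(1,3) v(1,3) by simp
    then show ?thesis
      unfolding images 1 by (simp add: image_Int[OF S_inj[OF v(2)], symmetric])
  next
    case 2
    then have "i = 3 \<and> j = 4 \<or> i = 4 \<and> j = 3"
      by (auto simp: doubleton_eq_iff)
    then show ?thesis
    proof
      assume "i = 3 \<and> j = 4"
      then show ?thesis
        unfolding images using touching_cylinders_disjoint[OF words(1) _ words(3)] u3 words(2)
        by simp
    next
      assume "i = 4 \<and> j = 3"
      then show ?thesis
        unfolding images using touching_cylinders_disjoint[OF words(3) _ words(1)] v3 words(4)
        by (simp add: Int_commute)
    qed
  next
    case 3
    show ?thesis
      unfolding images
      by (rule S_images_disjoint[OF u(2) v(2) 3(2,1) cylinder_subset_unit_interval[OF words(1)]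
          cylinder_subset_unit_interval[OF words(3)]])
  qed
qed simp

lemma strongly_separated_good_words:
  "strongly_separated_ifs K (good_words (Suc n)) (word_map S) (\<lambda>w. prod_list (map ratio w))"
proof
  fix w assume "w \<in> good_words (Suc n)"
  then have "w \<in> words {1..6} (Suc n)"
    using good_words_subset_words by blast
  then have w: "set w \<subseteq> {1..6}" "length w = Suc n"
    by (simp_all add: words_def)
  have "prod_list (map ratio w) \<le> (1/36) ^ Suc n"
    using w ratio_bounds prod_list_le_power[of "map ratio w" "1/36"] by fastforce
  also have "\<dots> < 1"
    by (rule power_Suc_less_one) simp_all
  finally have "prod_list (map ratio w) < 1" .
  moreover have "0 < prod_list (map ratio w)"
    using w(1) ratio_bounds by (intro prod_list_pos) force
  ultimately show "0 < prod_list (map ratio w) \<and> prod_list (map ratio w) < 1"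
    by simp
  show "dist (word_map S w x) (word_map S w y) = prod_list (map ratio w) * dist x y" for x y
    using dist_S w(1) by (rule word_map_dist)
  show "word_map S w ` K \<subseteq> K"
    using S_maps_into w(1) by (rule word_map_image_subset)
next
  show "good_words (Suc n) \<noteq> {}"
    using replicate_in_good_words by blast
next
  fix u v assume "u \<in> good_words (Suc n)" "v \<in> good_words (Suc n)" "u \<noteq> v"
  then show "word_map S u ` K \<inter> word_map S v ` K = {}"
    by (rule good_words_cylinders_disjoint)
qed (simp_all add: compact_K K_nonempty finite_good_words)

lemma good_words_ratio_sum_ge_1:
  assumes "1 < moran_sum t"
  shows "\<exists>n. 1 \<le> (\<Sum>w\<in>good_words (Suc n). prod_list (map ratio w) powr t)"
proof -
  define f where "f i = ratio i powr t" for i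
  define \<beta> where "\<beta> = f 3 / (moran_sum t - f 1)"
  have sum_f: "sum f {1..6} = moran_sum t"
    using sum_ratio_powr[of t] by (simp add: f_def)
  have "moran_sum t - f 1 = q powr t + 4 * r powr t"
    by (simp add: moran_sum_def f_def ratio_def)
  then have \<beta>_eq: "\<beta> = q powr t / (q powr t + 4 * r powr t)"
    by (simp add: \<beta>_def f_def ratio_def)
  have den: "0 < q powr t + 4 * r powr t"
    using q(1) r(1) by (intro add_pos_pos) simp_all
  then have "0 \<le> \<beta>" "\<beta> < 1"
    unfolding \<beta>_eq using r(1) by (simp_all add: divide_less_eq_1_pos)
  obtain n where "1 / (1 - \<beta>) < moran_sum t ^ n"
    using real_arch_pow[OF assms] by blast
  then have "1 < (1 - \<beta>) * moran_sum t ^ n"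
    using \<open>\<beta> < 1\<close> by (simp add: field_simps)
  also have "\<dots> \<le> (1 - \<beta>) * moran_sum t ^ Suc n"
    using \<open>\<beta> < 1\<close> assms by (intro mult_left_mono power_increasing) auto
  also have "\<dots> \<le> (1 - \<beta>) * moran_sum t ^ Suc n + \<beta> * f 1 ^ Suc n"
    using \<open>0 \<le> \<beta>\<close> by (simp add: f_def)
  also have "\<dots> = (\<Sum>w\<in>good_words (Suc n). prod_list (map f w))"
  proof (rule sum_prod_list_good_words[of f "Suc n", unfolded sum_f, folded \<beta>_def, symmetric])
    show "moran_sum t \<noteq> f 1"
      using \<open>moran_sum t - f 1 = _\<close> den by simp
  qed
  also have "\<dots> = (\<Sum>w\<in>good_words (Suc n). prod_list (map ratio w) powr t)"
  proof (rule sum.cong[OF refl])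
    fix w assume "w \<in> good_words (Suc n)"
    then have "w \<in> words {1..6} (Suc n)"
      using good_words_subset_words by blast
    then show "prod_list (map f w) = prod_list (map ratio w) powr t"
      unfolding f_def using ratio_bounds by (intro prod_list_map_powr[symmetric]) (force simp: words_def)
  qed
  finally show ?thesis
    by (intro exI[of _ n]) simp
qed

lemma hausdorff_measure_pos_if_moran_sum_gt_1:
  assumes "0 < t" "1 < moran_sum t"
  shows "0 < hausdorff_measure t K"
proof -
  obtain n where "1 \<le> (\<Sum>w\<in>good_words (Suc n). prod_list (map ratio w) powr t)"
    using good_words_ratio_sum_ge_1[OF assms(2)] by blast
  then show ?thesis
    by (rule strongly_separated_ifs.hausdorff_measure_pos[OF strongly_separated_good_words assms(1)])
qed

lemma hausdorff_measure_eq_0_if_moran_sum_lt_1: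
  assumes "0 < t" "moran_sum t < 1"
  shows "hausdorff_measure t K = 0"
proof (rule hausdorff_measure_self_similar_eq_0[where J = "{1..6}"])
  show "K \<subseteq> (\<Union>i\<in>{1..6}. S i ` K)"
    using K_eq by blast
  show "(\<Sum>i\<in>{1..6}. ratio i powr t) < 1"
    using assms(2) sum_ratio_powr[of t] by simp
  show "0 \<le> ratio i" if "i \<in> {1..6}" for i
    using ratio_bounds[OF that] by simp
qed (use compact_imp_bounded[OF compact_K] dist_S assms(1) in auto)

lemma moran_sum_strict_antimono: "s < t \<Longrightarrow> moran_sum t < moran_sum s"
  using p q r by (simp add: moran_sum_def add_strict_mono powr_less_mono')

lemma moran_sum_root: obtains s where "0 < s" "moran_sum s = 1"
proof -
  have "continuous_on {0..1} moran_sum"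
    unfolding moran_sum_def using p q r by (intro continuous_intros) auto
  moreover have "moran_sum 1 \<le> 1" "1 \<le> moran_sum 0"
    using p q r by (simp_all add: moran_sum_def)
  ultimately obtain s where "0 \<le> s" "moran_sum s = 1"
    using IVT2'[of moran_sum 1 1 0] by auto
  moreover have "s \<noteq> 0"
    using \<open>moran_sum s = 1\<close> p q r by (auto simp: moran_sum_def)
  ultimately show ?thesis
    using that[of s] by simp
qed

lemma moran_sum_hausdorff_dim: "moran_sum (hausdorff_dim K) = 1"
proof -
  obtain s where s: "0 < s" "moran_sum s = 1"
    using moran_sum_root by blast
  have "hausdorff_dim K = s"
  proof (rule hausdorff_dim_eqI[OF s(1)])
    show "hausdorff_measure t K = 0" if "s < t" for t
      using s that moran_sum_strict_antimono[OF that] by (intro hausdorff_measure_eq_0_if_moran_sum_lt_1) auto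
    show "hausdorff_measure t K \<noteq> 0" if "0 < t" "t < s" for t
      using s that moran_sum_strict_antimono[OF that(2)] hausdorff_measure_pos_if_moran_sum_gt_1[of t] by auto
  qed
  with s show ?thesis
    by simp
qed

end

theorem theorem5:
  fixes p q r h a :: real and S :: "nat \<Rightarrow> real \<Rightarrow> real" and K :: "real set"
  assumes "p \<in> {0<..<1/36}" and "q \<in> {0<..<1/36}" and "r \<in> {0<..<1/36}"
    and "h = 8/15" and "a = 3/15"
    and "S 1 = (\<lambda>x. p * x)" and "S 2 = (\<lambda>x. a + r * x)" and "S 3 = (\<lambda>x. h - q * x)"
    and "S 4 = (\<lambda>x. h - r + r * x)" and "S 5 = (\<lambda>x. 1 - a - r * x)"
    and "S 6 = (\<lambda>x. 1 - r + r * x)"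
    and "is_attractor S {1..6} K"
    and "S 3 ` K \<inter> S 4 ` K = {h}"
  shows "p powr (hausdorff_dim K) + q powr (hausdorff_dim K) + 4 * r powr (hausdorff_dim K) = 1"
proof -
  interpret pqr_ifs p q r h a S K
    using assms by unfold_locales auto
  show ?thesis
    using moran_sum_hausdorff_dim by (simp add: moran_sum_def)
qed

end
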